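(* In CCS, for every channel $a\in\mathcal{C}$ and all processes $x,y,z$: (1) $x\xrightarrow{\tau}y$ iff $x\to y$; (2) $x\xrightarrow{a}y$ iff $(x,\bar a.\mathbf{0})\to y$; (3) $x\xrightarrow{\bar a}y$ iff $(x,a.\mathbf{0})\to y$; (4) $(x,y)\to z$ iff there exist a channel $b$ and processes $x',y'$ with $z\equiv x'\parallel y'$ and either ($x\xrightarrow{b}x'$ and $y\xrightarrow{\bar b}y'$) or ($x\xrightarrow{\bar b}x'$ and $y\xrightarrow{b}y'$). Here $\xrightarrow{\alpha}$ is the CCS labelled transition relation and $\to$ is the reaction relation of the CCS dialgebra.
   Context: Let $\mathcal{C}$ be a countable set of channels. Prefixes: $\alpha::=\tau\mid a\mid\bar a$ ($a\in\mathcal{C}$). Processes: $P::=\sum_{i\in I}\alpha_i.P_i\mid P_1\parallel P_2\mid(\nu a)P$ with $I$ finite, sums taken up to reordering of summands; $\mathbf{0}$ is the empty sum, $\alpha.P$ a one-summand sum, and $\alpha.P+Q$ denotes a sum having $\alpha.P$ as a summand. Free names: $\mathit{fn}(\tau)=\emptyset$, $\mathit{fn}(a)=\mathit{fn}(\bar a)=\{a\}$, $\mathit{fn}(\sum\alpha_i.P_i)=\bigcup_i(\mathit{fn}(\alpha_i)\cup\mathit{fn}(P_i))$, $\mathit{fn}(P\parallel Q)=\mathit{fn}(P)\cup\mathit{fn}(Q)$, $\mathit{fn}((\nu a)P)=\mathit{fn}(P)\setminus\{a\}$. Structural congruence $\equiv$ is the least congruence containing $\alpha$-conversion of $a$ in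 $(\nu a)P$, the commutative monoid laws for $\parallel$ with unit $\mathbf{0}$, and $(\nu a)(P\parallel Q)\equiv((\nu a)P)\parallel Q$ if $a\notin\mathit{fn}(Q)$, $(\nu a)\mathbf{0}\equiv\mathbf{0}$, $(\nu a)(\nu b)P\equiv(\nu b)(\nu a)P$. The CCS LTS is the least relation $P\xrightarrow{\alpha}P'$ closed under: (pre) $\alpha.P+Q\xrightarrow{\alpha}P$; (res) if $a\notin\mathit{fn}(\alpha)$ and $P\xrightarrow{\alpha}P'$ then $(\nu a)P\xrightarrow{\alpha}(\nu a)P'$; (par) if $P\xrightarrow{\alpha}P'$ then $P\parallel Q\xrightarrow{\alpha}P'\parallel Q$; (syn) if $P\xrightarrow{\bar c}P'$ and $Q\xrightarrow{c}Q'$ then $P\parallel Q\xrightarrow{\tau}P'\parallel Q'$; (str) if $P\equiv Q$, $P'\equiv Q'$ and $P\xrightarrow{\alpha}P'$ then $Q\xrightarrow{\alpha}Q'$. The CCS dialgebra reaction relation consists of the least relations $P\to R$ (processes) and $(P,Q)\to R$ (pairs of processes) closed under: (tau) $\tau.P+Q\to P$; (res) $P\to P'$ implies $(\nu a)P\to(\nu a)P'$; (par$_1$) $P\to P'$ implies $P\parallel Q\to P'\parallel Q$; (int) $(P,Q)\to R$ implies $P\parallel Q\to R$; (hid) $(P,Q)\to R$ and $a\notin\mathit{fn}(Q)$ imply $((\nu a)P,Q)\to(\nu a)R$; (par$_2$) $(P,Q)\to R$ implies $(P\parallel S,Q)\to S\parallel R$; (syn) $(\bar a.P+S,a.Q+T)\to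 P\parallel Q$; (sym) $(P,Q)\to R$ implies $(Q,P)\to R$; (str$_1$) $P\to R$, $P\equiv Q$, $R\equiv S$ imply $Q\to S$; (str$_2$) $(P,Q)\to R$, $P\equiv S$, $Q\equiv T$, $R\equiv U$ imply $(S,T)\to U$. *)

theory Defs
  imports "HOL-Library.Multiset" "HOL-Library.Countable"
begin

datatype 'c prefix = Tau | In 'c | Out 'c

text \<open>Processes. Sums are finite multisets of prefixed summands, so that
  sums are taken up to reordering of summands (duplicates are kept).\<close>
datatype 'c proc =
    Sum "('c prefix \<times> 'c proc) multiset"
  | Par "'c proc" "'c proc"
  | Res 'c "'c proc"

abbreviation Nil :: "'c proc" where "Nil \<equiv> Sum {#}"

abbreviation Pre :: "'c prefix \<Rightarrow> 'c proc \<Rightarrow> 'c proc" where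
  "Pre \<alpha> P \<equiv> Sum {#(\<alpha>, P)#}"

fun fnpre :: "'c prefix \<Rightarrow> 'c set" where
  "fnpre Tau = {}"
| "fnpre (In a) = {a}"
| "fnpre (Out a) = {a}"

primrec fnp :: "'c proc \<Rightarrow> 'c set" where
  "fnp (Sum M) = (\<Union>x \<in> set_mset (image_mset (map_prod id fnp) M). fnpre (fst x) \<union> snd x)"
| "fnp (Par P Q) = fnp P \<union> fnp Q"
| "fnp (Res a P) = fnp P - {a}"

definition swapc :: "'c \<Rightarrow> 'c \<Rightarrow> 'c \<Rightarrow> 'c" where
  "swapc a b c = (if c = a then b else if c = b then a else c)"

fun swpre :: "'c \<Rightarrow> 'c \<Rightarrow> 'c prefix \<Rightarrow> 'c prefix" where
  "swpre a b Tau = Tau"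
| "swpre a b (In c) = In (swapc a b c)"
| "swpre a b (Out c) = Out (swapc a b c)"

primrec swp :: "'c \<Rightarrow> 'c \<Rightarrow> 'c proc \<Rightarrow> 'c proc" where
  "swp a b (Sum M) = Sum (image_mset (map_prod (swpre a b) (swp a b)) M)"
| "swp a b (Par P Q) = Par (swp a b P) (swp a b Q)"
| "swp a b (Res c P) = Res (swapc a b c) (swp a b P)"

inductive scong :: "'c proc \<Rightarrow> 'c proc \<Rightarrow> bool" where
  refl: "scong P P"
| sym: "scong P Q \<Longrightarrow> scong Q P"
| trans: "scong P Q \<Longrightarrow> scong Q R \<Longrightarrow> scong P R"
| ctx_sum: "scong P P' \<Longrightarrow> scong (Sum (add_mset (\<alpha>, P) M)) (Sum (add_mset (\<alpha>, P') M))"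
| ctx_par: "scong P P' \<Longrightarrow> scong Q Q' \<Longrightarrow> scong (Par P Q) (Par P' Q')"
| ctx_res: "scong P P' \<Longrightarrow> scong (Res a P) (Res a P')"
| alpha: "b \<notin> fnp P \<Longrightarrow> scong (Res a P) (Res b (swp a b P))"
| par_comm: "scong (Par P Q) (Par Q P)"
| par_assoc: "scong (Par (Par P Q) R) (Par P (Par Q R))"
| par_unit: "scong (Par P Nil) P"
| scope: "a \<notin> fnp Q \<Longrightarrow> scong (Res a (Par P Q)) (Par (Res a P) Q)"
| res_nil: "scong (Res a Nil) Nil"
| res_comm: "scong (Res a (Res b P)) (Res b (Res a P))"

inductive ltrans :: "'c proc \<Rightarrow> 'c prefix \<Rightarrow> 'c proc \<Rightarrow> bool" where
  pre: "ltrans (Sum (add_mset (\<alpha>, P) Q)) \<alpha> P"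
| res: "a \<notin> fnpre \<alpha> \<Longrightarrow> ltrans P \<alpha> P' \<Longrightarrow> ltrans (Res a P) \<alpha> (Res a P')"
| par: "ltrans P \<alpha> P' \<Longrightarrow> ltrans (Par P Q) \<alpha> (Par P' Q)"
| syn: "ltrans P (Out c) P' \<Longrightarrow> ltrans Q (In c) Q' \<Longrightarrow> ltrans (Par P Q) Tau (Par P' Q')"
| str: "scong P Q \<Longrightarrow> scong P' Q' \<Longrightarrow> ltrans P \<alpha> P' \<Longrightarrow> ltrans Q \<alpha> Q'"

text \<open>CCS dialgebra reaction relation: unary reactions P \<rightarrow> R (react1)
  and binary reactions (P,Q) \<rightarrow> R (react2).\<close>
inductive react1 :: "'c proc \<Rightarrow> 'c proc \<Rightarrow> bool"
  and react2 :: "'c proc \<Rightarrow> 'c proc \<Rightarrow> 'c proc \<Rightarrow> bool" where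
  tau: "react1 (Sum (add_mset (Tau, P) Q)) P"
| res: "react1 P P' \<Longrightarrow> react1 (Res a P) (Res a P')"
| par1: "react1 P P' \<Longrightarrow> react1 (Par P Q) (Par P' Q)"
| int: "react2 P Q R \<Longrightarrow> react1 (Par P Q) R"
| hid: "react2 P Q R \<Longrightarrow> a \<notin> fnp Q \<Longrightarrow> react2 (Res a P) Q (Res a R)"
| par2: "react2 P Q R \<Longrightarrow> react2 (Par P S) Q (Par S R)"
| syn: "react2 (Sum (add_mset (Out a, P) S)) (Sum (add_mset (In a, Q) T)) (Par P Q)"
| sym: "react2 P Q R \<Longrightarrow> react2 Q P R"
| str1: "react1 P R \<Longrightarrow> scong P Q \<Longrightarrow> scong R S \<Longrightarrow> react1 Q S"
| str2: "react2 P Q R \<Longrightarrow> scong P S \<Longrightarrow> scong Q T \<Longrightarrow> scong R U \<Longrightarrow> react2 S T U"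

end

theory Submission imports Defs begin

text \<open>
  Soundness (reactions are transitions) is a single simultaneous induction over the
  reaction relation: a unary reaction is a tau-transition, and a binary reaction of
  (P, Q) into R splits R, up to structural congruence, into the residuals of two
  complementary visible transitions of P and Q.

  Completeness is an induction over transitions.  Its only delicate case is
  restriction: rule hid demands that the restricted name be fresh for the partner,
  so the name is first alpha-converted to a fresh one (the channel type is infinite);
  this needs that name swapping preserves congruence, transitions and reactions.

  For the prefix partners a.0 and (co-)a.0 we finally invert their transitions with a
  size measure and a "kind of prefix" invariant, both stable under congruence.
\<close>

section \<open>Free names and name swapping\<close>

text \<open>Processes have finitely many free names, so fresh names exist in an infinite channel type.\<close>
lemma finite_fnpre [simp]: "finite (fnpre p)"
  by (cases p) auto

lemma finite_fnp: "finite (fnp P)"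
  by (induction P) auto

lemma swapc_invol [simp]: "swapc a b (swapc a b c) = c"
  by (simp add: swapc_def)

lemma swapc_inj: "swapc a b x = swapc a b y \<longleftrightarrow> x = y"
  by (metis swapc_invol)

lemma swapc_conj: "swapc a b (swapc c d x) = swapc (swapc a b c) (swapc a b d) (swapc a b x)"
  unfolding swapc_def by auto

lemma swpre_invol [simp]: "swpre a b (swpre a b p) = p"
  by (cases p) auto

lemma swpre_conj: "swpre a b (swpre c d p) = swpre (swapc a b c) (swapc a b d) (swpre a b p)"
  by (cases p) (simp_all only: swpre.simps swapc_conj[of a b c d])

lemma fnpre_swpre: "fnpre (swpre a b p) = swapc a b ` fnpre p"
  by (cases p) auto

lemma swp_invol [simp]: "swp a b (swp a b P) = P"
proof (induction P)
  case (Sum M)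
  then show ?case by (auto simp: multiset.map_comp intro!: multiset.map_ident_strong)
qed auto

lemma swp_conj: "swp a b (swp c d P) = swp (swapc a b c) (swapc a b d) (swp a b P)"
proof (induction P)
  case (Sum M)
  then show ?case
    by (simp add: multiset.map_comp, intro multiset.map_cong0, clarsimp simp: swpre_conj[of a b c d])
next
  case (Res e P)
  then show ?case by (simp only: swp.simps swapc_conj[of a b c d])
qed auto

lemma fnp_swp: "fnp (swp a b P) = swapc a b ` fnp P"
proof (induction P)
  case (Sum M)
  then show ?case by (force simp: fnpre_swpre)
next
  case (Res c P)
  then show ?case by (auto simp: swapc_def)
qed auto

declare scong.trans [trans]

lemma alpha_fresh: "b \<notin> fnp X \<Longrightarrow> scong (Res b (swp e b X)) (Res e X)"
  by (simp add: scong.alpha scong.sym)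

lemma scong_fnp: "scong P Q \<Longrightarrow> fnp P = fnp Q"
proof (induction rule: scong.induct)
  case (alpha b P a)
  then show ?case by (auto simp: fnp_swp swapc_def)
qed auto

lemma ltrans_fnp: "ltrans P \<alpha> P' \<Longrightarrow> fnp P' \<subseteq> fnp P \<and> fnpre \<alpha> \<subseteq> fnp P"
proof (induction rule: ltrans.induct)
  case (str P Q P' Q' \<alpha>)
  then show ?case using scong_fnp by blast
qed auto

lemma scong_swp: "scong P Q \<Longrightarrow> scong (swp a b P) (swp a b Q)"
proof (induction rule: scong.induct)
  case (alpha d P c)
  then have "swapc a b d \<notin> fnp (swp a b P)" by (auto simp: fnp_swp swapc_inj)
  then show ?case by (simp only: swp.simps swp_conj[of a b c d]) (rule scong.alpha)
next
  case (scope c Q P)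
  then show ?case by (auto simp: fnp_swp swapc_inj intro!: scong.scope)
qed (auto intro: scong.intros)

lemma ltrans_swp: "ltrans P \<alpha> P' \<Longrightarrow> ltrans (swp a b P) (swpre a b \<alpha>) (swp a b P')"
proof (induction rule: ltrans.induct)
  case (res c \<alpha> P P')
  then show ?case by (auto simp: fnpre_swpre swapc_inj intro!: ltrans.res)
next
  case (syn P c P' Q Q')
  then show ?case by (auto intro: ltrans.syn)
next
  case (str P Q P' Q' \<alpha>)
  then show ?case by (meson ltrans.str scong_swp)
qed (auto intro: ltrans.intros)

lemma react_swp:
  "react1 P R \<Longrightarrow> react1 (swp a b P) (swp a b R)"
  "react2 P Q R \<Longrightarrow> react2 (swp a b P) (swp a b Q) (swp a b R)"
proof (induct P R and P Q R rule: react1_react2.inducts)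
  case (hid P Q R c)
  then show ?case by (auto simp: fnp_swp swapc_inj intro!: react1_react2.hid)
next
  case (str1 P R Q S)
  then show ?case by (meson react1_react2.str1 scong_swp)
next
  case (str2 P Q R S T U)
  then show ?case by (meson react1_react2.str2 scong_swp)
qed (auto intro: react1_react2.intros)

section \<open>Soundness: reactions are transitions\<close>

text \<open>The right-hand side of part (4): z splits into residuals of complementary
  visible transitions of x and y.\<close>
definition complementary :: "'c proc \<Rightarrow> 'c proc \<Rightarrow> 'c proc \<Rightarrow> bool" where
  "complementary x y z \<longleftrightarrow> (\<exists>b x' y'. scong z (Par x' y') \<and>
     ((ltrans x (In b) x' \<and> ltrans y (Out b) y') \<or> (ltrans x (Out b) x' \<and> ltrans y (In b) y')))"

lemma complementaryE:
  assumes "complementary x y z"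
  obtains b x' y' where "scong z (Par x' y')"
    and "(ltrans x (In b) x' \<and> ltrans y (Out b) y') \<or> (ltrans x (Out b) x' \<and> ltrans y (In b) y')"
  using assms unfolding complementary_def by blast

lemma complementary_tau: "complementary P Q R \<Longrightarrow> ltrans (Par P Q) Tau R"
proof (elim complementaryE disjE conjE)
  fix b x' y'
  assume R: "scong R (Par x' y')"
  show "ltrans (Par P Q) Tau R" if "ltrans P (Out b) x'" "ltrans Q (In b) y'"
    using that R by (meson ltrans.str ltrans.syn scong.refl scong.sym)
  show "ltrans (Par P Q) Tau R" if "ltrans P (In b) x'" "ltrans Q (Out b) y'"
  proof -
    have "ltrans (Par Q P) Tau (Par y' x')" using that by (intro ltrans.syn)
    moreover have "scong (Par y' x') R" using R by (meson scong.par_comm scong.sym scong.trans)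
    ultimately show ?thesis by (meson ltrans.str scong.par_comm)
  qed
qed

lemma complementary_Res:
  assumes "complementary P Q R" "a \<notin> fnp Q"
  shows "complementary (Res a P) Q (Res a R)"
proof -
  from assms(1) obtain b x' y' where R: "scong R (Par x' y')"
    and c: "(ltrans P (In b) x' \<and> ltrans Q (Out b) y') \<or> (ltrans P (Out b) x' \<and> ltrans Q (In b) y')"
    by (rule complementaryE)
  text \<open>a is not free in Q, hence neither in the label nor in Q's residual.\<close>
  have "a \<noteq> b" and "a \<notin> fnp y'" using c assms(2) ltrans_fnp by fastforce+
  have "scong (Res a R) (Res a (Par x' y'))" using R by (rule scong.ctx_res)
  also have "scong \<dots> (Par (Res a x') y')" using \<open>a \<notin> fnp y'\<close> by (rule scong.scope)
  finally have "scong (Res a R) (Par (Res a x') y')" .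
  moreover have "ltrans (Res a P) \<beta> (Res a x')" if "ltrans P \<beta> x'" "\<beta> \<in> {In b, Out b}" for \<beta>
    using that \<open>a \<noteq> b\<close> by (auto intro: ltrans.res)
  ultimately show ?thesis using c unfolding complementary_def by blast
qed

lemma complementary_Par:
  assumes "complementary P Q R"
  shows "complementary (Par P S) Q (Par S R)"
proof -
  from assms obtain b x' y' where R: "scong R (Par x' y')"
    and c: "(ltrans P (In b) x' \<and> ltrans Q (Out b) y') \<or> (ltrans P (Out b) x' \<and> ltrans Q (In b) y')"
    by (rule complementaryE)
  have "scong (Par S R) (Par S (Par x' y'))" using R by (intro scong.ctx_par scong.refl)
  also have "scong \<dots> (Par (Par S x') y')" by (rule scong.sym, rule scong.par_assoc)
  also have "scong \<dots> (Par (Par x' S) y')" by (intro scong.ctx_par scong.refl scong.par_comm)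
  finally show ?thesis using c unfolding complementary_def by (meson ltrans.par)
qed

lemma complementary_sym: "complementary P Q R \<Longrightarrow> complementary Q P R"
  unfolding complementary_def by (meson scong.par_comm scong.trans)

lemma complementary_scong:
  assumes "complementary P Q R" "scong P S" "scong Q T" "scong R U"
  shows "complementary S T U"
proof -
  have "ltrans S \<alpha> X" if "ltrans P \<alpha> X" for \<alpha> X
    using that assms(2) by (meson ltrans.str scong.refl)
  moreover have "ltrans T \<alpha> X" if "ltrans Q \<alpha> X" for \<alpha> X
    using that assms(3) by (meson ltrans.str scong.refl)
  moreover have "scong U R" using assms(4) by (rule scong.sym)
  ultimately show ?thesis using assms(1) unfolding complementary_def by (meson scong.trans)
qed

lemma react_sound:
  "react1 P R \<Longrightarrow> ltrans P Tau R"
  "react2 P Q R \<Longrightarrow> complementary P Q R"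
proof (induct P R and P Q R rule: react1_react2.inducts)
  case (tau P Q)
  then show ?case by (rule ltrans.pre)
next
  case (res P P' a)
  then show ?case by (intro ltrans.res) auto
next
  case (syn a P S Q T)
  then show ?case unfolding complementary_def by (meson ltrans.pre scong.refl)
next
  case (str1 P R Q S)
  then show ?case by (meson ltrans.str)
qed (auto intro: ltrans.par complementary_tau complementary_Res complementary_Par
       complementary_sym complementary_scong)

section \<open>Completeness: transitions are reactions\<close>

lemma react2_swap: "react2 P Q (Par P' Q') \<Longrightarrow> react2 Q P (Par Q' P')"
  by (meson react1_react2.str2 react1_react2.sym scong.par_comm scong.refl)

lemma react2_Par_left: "react2 P Q (Par P' Q') \<Longrightarrow> react2 (Par P R) Q (Par (Par P' R) Q')"
proof -
  assume "react2 P Q (Par P' Q')"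
  then have r: "react2 (Par P R) Q (Par R (Par P' Q'))" by (rule react1_react2.par2)
  have "scong (Par R (Par P' Q')) (Par (Par P' Q') R)" by (rule scong.par_comm)
  also have "scong \<dots> (Par P' (Par Q' R))" by (rule scong.par_assoc)
  also have "scong \<dots> (Par P' (Par R Q'))" by (intro scong.ctx_par scong.refl scong.par_comm)
  also have "scong \<dots> (Par (Par P' R) Q')" by (rule scong.sym, rule scong.par_assoc)
  finally show ?thesis by (rule react1_react2.str2[OF r scong.refl scong.refl])
qed

text \<open>A left component acting under a restriction (rule hid): the restricted name e
  is renamed to a name b fresh for everything, so that it is fresh for the partner.\<close>
lemma react2_Res_left:
  assumes fresh: "b \<notin> fnp P \<union> fnp P' \<union> fnp Q \<union> fnp Q'"
    and r: "react2 (swp e b P) Q (Par (swp e b P') Q')"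
  shows "react2 (Res e P) Q (Par (Res e P') Q')"
proof -
  have hid: "react2 (Res b (swp e b P)) Q (Res b (Par (swp e b P') Q'))"
    using r fresh by (intro react1_react2.hid) auto
  have "scong (Res b (Par (swp e b P') Q')) (Par (Res b (swp e b P')) Q')"
    using fresh by (intro scong.scope) auto
  also have "scong \<dots> (Par (Res e P') Q')"
    using fresh by (intro scong.ctx_par alpha_fresh scong.refl) auto
  finally have "scong (Res b (Par (swp e b P') Q')) (Par (Res e P') Q')" .
  moreover have "scong (Res b (swp e b P)) (Res e P)" using fresh by (intro alpha_fresh) auto
  ultimately show ?thesis using hid by (meson react1_react2.str2 scong.refl)
qed

lemma input_reacts_with_output_prefix:
  fixes Q :: "'c proc"
  assumes inf: "infinite (UNIV :: 'c set)"
  shows "ltrans Q \<alpha> Q' \<Longrightarrow> \<alpha> = In c \<Longrightarrow>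
    react2 Q (Sum (add_mset (Out c, P) S)) (Par Q' P)"
proof (induction arbitrary: P S rule: ltrans.induct)
  case (pre \<alpha> Q M)
  then show ?case by (simp add: react2_swap react1_react2.syn)
next
  case (res e \<alpha> Q0 Q0')
  let ?Pd = "Sum (add_mset (Out c, P) S)"
  obtain b where b: "b \<notin> fnp ?Pd \<union> fnp Q0 \<union> {e, c}"
    using ex_new_if_finite[OF inf, of "fnp ?Pd \<union> fnp Q0 \<union> {e, c}"] finite_fnp by auto
  have "b \<notin> fnp Q0'" using b ltrans_fnp[OF res.hyps(2)] by auto
  have "swapc e b c = c" using b res by (auto simp: swapc_def)
  then have "react2 Q0 (swp e b ?Pd) (Par Q0' (swp e b P))" using res by simp
  from react_swp(2)[OF this, of e b]
  have "react2 (swp e b Q0) ?Pd (Par (swp e b Q0') P)" by (simp only: swp.simps(2) swp_invol)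
  then show ?case using b \<open>b \<notin> fnp Q0'\<close> by (intro react2_Res_left[of b]) auto
next
  case (par Q0 \<alpha> Q0' R)
  then show ?case by (simp add: react2_Par_left)
next
  case (str Q0 Q P0' Q' \<alpha>)
  then show ?case by (meson react1_react2.str2 scong.refl scong.ctx_par)
qed simp

lemma output_input_react:
  fixes P :: "'c proc"
  assumes inf: "infinite (UNIV :: 'c set)"
  shows "ltrans P \<alpha> P' \<Longrightarrow> \<alpha> = Out c \<Longrightarrow> ltrans Q (In c) Q' \<Longrightarrow>
    react2 P Q (Par P' Q')"
proof (induction arbitrary: Q Q' rule: ltrans.induct)
  case (pre \<alpha> P M)
  then show ?case by (simp add: react2_swap input_reacts_with_output_prefix[OF inf])
next
  case (res e \<alpha> P0 P0')
  obtain b where b: "b \<notin> fnp Q \<union> fnp P0 \<union> {e, c}"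
    using ex_new_if_finite[OF inf, of "fnp Q \<union> fnp P0 \<union> {e, c}"] finite_fnp by auto
  have "b \<notin> fnp P0'" using b ltrans_fnp[OF res.hyps(2)] by auto
  have "b \<notin> fnp Q'" using b ltrans_fnp[OF res.prems(2)] by auto
  have "swapc e b c = c" using b res by (auto simp: swapc_def)
  then have "ltrans (swp e b Q) (In c) (swp e b Q')"
    using ltrans_swp[OF res.prems(2), of e b] by simp
  then have "react2 P0 (swp e b Q) (Par P0' (swp e b Q'))" using res by blast
  from react_swp(2)[OF this, of e b]
  have "react2 (swp e b P0) Q (Par (swp e b P0') Q')" by simp
  then show ?case using b \<open>b \<notin> fnp P0'\<close> \<open>b \<notin> fnp Q'\<close> by (intro react2_Res_left[of b]) auto
next
  case (par P0 \<alpha> P0' R)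
  then show ?case by (simp add: react2_Par_left)
next
  case (str P0 P P0' P' \<alpha>)
  then show ?case by (meson react1_react2.str2 scong.refl scong.ctx_par)
qed simp

lemma complementary_react:
  fixes x :: "'c proc"
  assumes inf: "infinite (UNIV :: 'c set)" and "complementary x y z"
  shows "react2 x y z"
proof -
  from assms(2) obtain b x' y' where z: "scong z (Par x' y')"
    and c: "(ltrans x (In b) x' \<and> ltrans y (Out b) y') \<or> (ltrans x (Out b) x' \<and> ltrans y (In b) y')"
    by (rule complementaryE)
  from c have "react2 x y (Par x' y')"
  proof (elim disjE conjE)
    assume "ltrans x (In b) x'" "ltrans y (Out b) y'"
    then show ?thesis
      using output_input_react[OF inf \<open>ltrans y (Out b) y'\<close> HOL.refl] by (simp add: react2_swap)
  next
    assume "ltrans x (Out b) x'" "ltrans y (In b) y'"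
    then show ?thesis using output_input_react[OF inf] by blast
  qed
  then show ?thesis using z by (meson react1_react2.str2 scong.refl scong.sym)
qed

lemma tau_react:
  fixes x :: "'c proc"
  assumes inf: "infinite (UNIV :: 'c set)"
  shows "ltrans x \<alpha> y \<Longrightarrow> \<alpha> = Tau \<Longrightarrow> react1 x y"
proof (induction rule: ltrans.induct)
  case (syn P c P' Q Q')
  then show ?case using output_input_react[OF inf] react1_react2.int by blast
next
  case (str P Q P' Q' \<alpha>)
  then show ?case by (meson react1_react2.str1)
qed (auto intro: react1_react2.intros)

section \<open>Transitions of a prefix followed by the inactive process\<close>

primrec weight :: "'c proc \<Rightarrow> nat" where
  "weight (Sum M) = sum_mset (image_mset (\<lambda>x. Suc (snd x)) (image_mset (map_prod id weight) M))"
| "weight (Par P Q) = weight P + weight Q"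
| "weight (Res a P) = weight P"

fun kind :: "'c prefix \<Rightarrow> nat" where
  "kind Tau = 0" | "kind (In a) = 1" | "kind (Out a) = 2"

primrec has_kind :: "nat \<Rightarrow> 'c proc \<Rightarrow> bool" where
  "has_kind k (Sum M) = (\<exists>x\<in>#M. kind (fst x) = k)"
| "has_kind k (Par P Q) = (has_kind k P \<or> has_kind k Q)"
| "has_kind k (Res a P) = has_kind k P"

lemma kind_swpre [simp]: "kind (swpre a b p) = kind p"
  by (cases p) auto

lemma weight_swp [simp]: "weight (swp a b P) = weight P"
proof (induction P)
  case (Sum M)
  then show ?case
    by (auto simp: multiset.map_comp comp_def intro!: arg_cong[where f=sum_mset] multiset.map_cong0)
qed auto

lemma has_kind_swp [simp]: "has_kind k (swp a b P) = has_kind k P"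
  by (induction P) auto

lemma scong_weight_has_kind: "scong P Q \<Longrightarrow> weight P = weight Q \<and> has_kind k P = has_kind k Q"
  by (induction rule: scong.induct) auto

lemma ltrans_weight_has_kind:
  "ltrans P \<alpha> P' \<Longrightarrow> \<alpha> \<noteq> Tau \<Longrightarrow> weight P' < weight P \<and> has_kind (kind \<alpha>) P"
proof (induction rule: ltrans.induct)
  case (str P Q P' Q' \<alpha>)
  then show ?case using scong_weight_has_kind by metis
qed auto

lemma weight_zero_scong_Nil: "weight P = 0 \<Longrightarrow> scong P Nil"
proof (induction P)
  case (Sum M)
  then show ?case by (auto intro: scong.refl)
next
  case (Par P Q)
  then have "scong (Par P Q) (Par Nil Nil)" by (auto intro: scong.ctx_par)
  then show ?case by (meson scong.par_unit scong.trans)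
next
  case (Res a P)
  then have "scong (Res a P) (Res a Nil)" by (auto intro: scong.ctx_res)
  then show ?case by (meson scong.res_nil scong.trans)
qed

lemma ltrans_prefix_Nil:
  assumes "ltrans (Pre \<beta> Nil) \<alpha> y" "\<alpha> \<noteq> Tau" "\<beta> \<noteq> Tau"
  shows "\<alpha> = \<beta> \<and> scong y Nil"
proof -
  from ltrans_weight_has_kind[OF assms(1,2)]
  have "weight y = 0" and "kind \<alpha> = kind \<beta>" by auto
  moreover from ltrans_fnp[OF assms(1)] have "fnpre \<alpha> \<subseteq> fnpre \<beta>" by auto
  ultimately show ?thesis
    using assms(2,3) weight_zero_scong_Nil by (cases \<alpha>; cases \<beta>) auto
qed

lemma complementary_prefix_Nil:
  assumes "\<beta> \<noteq> Tau"
  shows "complementary x (Pre \<beta> Nil) y \<longleftrightarrow>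
    (\<exists>b. (\<beta> = Out b \<and> ltrans x (In b) y) \<or> (\<beta> = In b \<and> ltrans x (Out b) y))"
proof
  assume "complementary x (Pre \<beta> Nil) y"
  then show "\<exists>b. (\<beta> = Out b \<and> ltrans x (In b) y) \<or> (\<beta> = In b \<and> ltrans x (Out b) y)"
  proof (elim complementaryE)
    fix b x' y'
    assume y: "scong y (Par x' y')"
      and c: "(ltrans x (In b) x' \<and> ltrans (Pre \<beta> Nil) (Out b) y') \<or>
              (ltrans x (Out b) x' \<and> ltrans (Pre \<beta> Nil) (In b) y')"
    have y_res: "ltrans x \<gamma> y" if "ltrans x \<gamma> x'" "scong y' Nil" for \<gamma>
    proof -
      have "scong (Par x' y') x'"
        using that(2) by (meson scong.ctx_par scong.par_unit scong.refl scong.trans)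
      with y have "scong x' y" by (meson scong.sym scong.trans)
      then show ?thesis by (rule ltrans.str[OF scong.refl _ that(1)])
    qed
    from c show ?thesis
    proof (elim disjE conjE)
      assume "ltrans x (In b) x'" "ltrans (Pre \<beta> Nil) (Out b) y'"
      then show ?thesis using ltrans_prefix_Nil[OF _ _ assms] y_res by blast
    next
      assume "ltrans x (Out b) x'" "ltrans (Pre \<beta> Nil) (In b) y'"
      then show ?thesis using ltrans_prefix_Nil[OF _ _ assms] y_res by blast
    qed
  qed
next
  assume "\<exists>b. (\<beta> = Out b \<and> ltrans x (In b) y) \<or> (\<beta> = In b \<and> ltrans x (Out b) y)"
  moreover have "ltrans (Pre \<beta> Nil) \<beta> Nil"
    using ltrans.pre[of \<beta> Nil "{#}"] by simp
  moreover have "scong y (Par y Nil)" by (rule scong.sym, rule scong.par_unit)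
  ultimately show "complementary x (Pre \<beta> Nil) y"
    unfolding complementary_def by blast
qed

theorem lemma1:
  fixes a :: "'c::countable" and x y z :: "'c proc"
  assumes "infinite (UNIV :: 'c set)"
  shows "(ltrans x Tau y \<longleftrightarrow> react1 x y)
       \<and> (ltrans x (In a) y \<longleftrightarrow> react2 x (Pre (Out a) Nil) y)
       \<and> (ltrans x (Out a) y \<longleftrightarrow> react2 x (Pre (In a) Nil) y)
       \<and> (react2 x y z \<longleftrightarrow>
            (\<exists>b x' y'. scong z (Par x' y') \<and>
               ((ltrans x (In b) x' \<and> ltrans y (Out b) y') \<or>
                (ltrans x (Out b) x' \<and> ltrans y (In b) y'))))"
proof -
  have react2_iff: "react2 P Q R \<longleftrightarrow> complementary P Q R" for P Q R :: "'c proc"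
    using react_sound(2) complementary_react[OF assms] by blast
  have "ltrans x Tau y \<longleftrightarrow> react1 x y"
    using tau_react[OF assms] react_sound(1) by blast
  moreover have "ltrans x (In a) y \<longleftrightarrow> react2 x (Pre (Out a) Nil) y"
    using complementary_prefix_Nil[of "Out a" x y] by (simp add: react2_iff)
  moreover have "ltrans x (Out a) y \<longleftrightarrow> react2 x (Pre (In a) Nil) y"
    using complementary_prefix_Nil[of "In a" x y] by (simp add: react2_iff)
  ultimately show ?thesis
    using react2_iff[of x y z] unfolding complementary_def by blast
qed

end
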